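(* Fix $m\in[n]$. There is a unique bijection $\psi_m$ between the set of complete $m$-chains of $\Pi(n)$ and the set of $(m,n)$-parking functions that sends a chain $C$ with top element $P$ and Jordan–Hölder permutation $\lambda$ to a partial parking function with priority forest $P$ and bird's eye permutation $\lambda^{-1}$. Explicitly, $\psi_m(C)=s_P\circ\lambda$, where $s_P$ is the shifted parent map of $P$.
   Context: Notation: $[n]=\{1,\dots,n\}$, $[n]_0=\{0,1,\dots,n\}$. Partial functions $f:[a]\to[b]$ are functions defined on a subset of $[a]$; a partial permutation is an injective one, and its inverse is the partial function defined on its image reversing it; compositions are defined where both steps are defined. Priority forests and the priority lattice: a priority forest (on $[n]_0$, with $m$ edges) is a rooted forest with vertex set $[n]_0$ and $m$ edges whose component trees $T_0,\dots,T_{n-m}$ are increasing (each non-root vertex has a larger label than its parent) and satisfy: for $j<k$ every label of $T_j$ is smaller than every label of $T_k$. The priority lattice $\Pi(n)$ consists of all priority forests on $[n]_0$ together with an extra top element $\hat1$; for priority forests $P\le P'$ iff $E(P)\subseteq E(P')$. The bottom $\hat0$ is the edgeless forest. A complete $m$-chain is a saturated chain $\hat0=P_0\lessdot P_1\lessdot\cdots\lessdot P_m$ of priority forests (each obtained from the previous by adding one edge). For priority forests $P\lessdot P'$, $\lambda(P,P')$ is the larger endpoint of the unique edge in $E(P')\setminus E(P)$; the Jordan–Hölder permutation of such a chain is the injective map $\lambda:[m]\to[n]$, $i\mapsto\lambda(P_{i-1},P_i)$, with partial inverse $\lambda^{-1}:[n]\to[m]$. Shifted parent map: for a priority forest $P$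 with parent map $p$ (defined on non-root vertices), $s_P:[n]\to[n]$ is the partial function with $s_P(i)=p(i)+1$ for every non-root vertex $i$ and undefined at roots. Partial parking functions: an $(m,n)$-parking function is a map $\pi:[m]\to[n]$ such that when cars $1,\dots,m$ arrive in this order to a one-way street with spots $1,\dots,n$, and car $i$ parks in the first empty spot $\ge\pi(i)$, all $m$ cars park. Its bird's eye permutation $\omega_\pi:[n]\to[m]$ is the partial permutation sending an occupied spot to the car parked there (undefined on empty spots). The priority forest of $\pi$ is the priority forest (on $[n]_0$, with $m$ edges) whose shifted parent map is $\pi\circ\omega_\pi$, i.e. vertex $i$ is a non-root with parent $\pi(\omega_\pi(i))-1$ if spot $i$ is occupied, and a root otherwise. *)

theory Defs
  imports Main
begin

(* A priority forest on [n]_0 = {0..n} is represented by its edge set E,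
   edges written (parent, child).  Each vertex
   has at most one parent (rooted forest; acyclicity follows from
   parent < child). *)

definition conn :: "(nat \<times> nat) set \<Rightarrow> (nat \<times> nat) set" where
  "conn E = (E \<union> E\<inverse>)\<^sup>*"

definition is_pforest :: "nat \<Rightarrow> (nat \<times> nat) set \<Rightarrow> bool" where
  "is_pforest n E \<longleftrightarrow>
     E \<subseteq> {(a, b). a < b \<and> b \<le> n} \<and>
     (\<forall>a a' b. (a, b) \<in> E \<longrightarrow> (a', b) \<in> E \<longrightarrow> a = a') \<and>
     (\<forall>x \<le> n. \<forall>y \<le> n. (x, y) \<notin> conn E \<longrightarrow>
        ((\<forall>u v. (x, u) \<in> conn E \<longrightarrow> (y, v) \<in> conn E \<longrightarrow> u < v) \<or>
         (\<forall>u v. (x, u) \<in> conn E \<longrightarrow> (y, v) \<in> conn E \<longrightarrow> v < u)))"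

definition complete_chains :: "nat \<Rightarrow> nat \<Rightarrow> (nat \<times> nat) set list set" where
  "complete_chains n m = {C. length C = Suc m \<and> C ! 0 = {} \<and>
      (\<forall>i \<le> m. is_pforest n (C ! i)) \<and>
      (\<forall>i < m. \<exists>e. e \<notin> C ! i \<and> C ! Suc i = insert e (C ! i))}"

definition jh :: "(nat \<times> nat) set list \<Rightarrow> nat \<Rightarrow> nat option" where
  "jh C i = (if 1 \<le> i \<and> i \<le> length C - 1
             then Some (let e = the_elem (C ! i - C ! (i - 1)) in max (fst e) (snd e))
             else None)"

definition map_inv :: "('a \<Rightarrow> 'b option) \<Rightarrow> 'b \<Rightarrow> 'a option" where
  "map_inv f y = (if \<exists>x. f x = Some y then Some (THE x. f x = Some y) else None)"

definition shifted_parent :: "(nat \<times> nat) set \<Rightarrow> nat \<Rightarrow> nat option" where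
  "shifted_parent E i = (if \<exists>a. (a, i) \<in> E then Some ((THE a. (a, i) \<in> E) + 1) else None)"

(* Parking process.  park_state n \<pi> k : spot \<Rightarrow> car, after cars 1..k arrived;
   car k parks in the first empty spot \<ge> \<pi>(k) among spots 1..n. *)
primrec park_state :: "nat \<Rightarrow> (nat \<Rightarrow> nat option) \<Rightarrow> nat \<Rightarrow> (nat \<Rightarrow> nat option)" where
  "park_state n \<pi> 0 = Map.empty"
| "park_state n \<pi> (Suc k) =
     (let \<omega> = park_state n \<pi> k in
      case \<pi> (Suc k) of
        None \<Rightarrow> \<omega>
      | Some a \<Rightarrow>
          (if \<exists>s. a \<le> s \<and> s \<le> n \<and> \<omega> s = None
           then \<omega>((LEAST s. a \<le> s \<and> s \<le> n \<and> \<omega> s = None) \<mapsto> Suc k)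
           else \<omega>))"

definition parking_functions :: "nat \<Rightarrow> nat \<Rightarrow> (nat \<Rightarrow> nat option) set" where
  "parking_functions m n = {\<pi>. dom \<pi> = {1..m} \<and> ran \<pi> \<subseteq> {1..n} \<and>
      (\<forall>k \<in> {1..m}. \<exists>s. the (\<pi> k) \<le> s \<and> s \<le> n \<and> park_state n \<pi> (k - 1) s = None)}"

definition birdseye :: "nat \<Rightarrow> nat \<Rightarrow> (nat \<Rightarrow> nat option) \<Rightarrow> nat \<Rightarrow> nat option" where
  "birdseye m n \<pi> = park_state n \<pi> m"

(* Priority forest of \<pi>: edge set whose shifted parent map is \<pi> \<circ> \<omega>_\<pi>,
   i.e. occupied spot i has parent \<pi>(\<omega>_\<pi>(i)) - 1. *)
definition pf_forest :: "nat \<Rightarrow> nat \<Rightarrow> (nat \<Rightarrow> nat option) \<Rightarrow> (nat \<times> nat) set" where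
  "pf_forest m n \<pi> = {(a - 1, i) | a i. (\<pi> \<circ>\<^sub>m birdseye m n \<pi>) i = Some a}"

end

theory Submission
  imports Defs
begin

text \<open>Write the edges of a complete chain \<open>C\<close> in the order they are added, the \<open>i\<close>-th one
  from \<open>p\<^sub>i\<close> to \<open>b\<^sub>i\<close>, so that \<open>\<psi>(C)\<close> gives car \<open>i\<close> the preference \<open>p\<^sub>i + 1\<close>. In a priority
  forest every vertex strictly between the endpoints of an edge has a parent; hence the spots
  \<open>p\<^sub>i + 1, \<dots>, b\<^sub>i - 1\<close> are children of earlier edges, i.e. taken by earlier cars, while \<open>b\<^sub>i\<close> is
  still free, and car \<open>i\<close> parks at \<open>b\<^sub>i\<close>. Conversely, the edges \<open>(\<pi>(c) - 1, spot of car c)\<close> of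
  a parking function, added car by car, form a complete chain: an increasing forest in which
  every vertex strictly inside an edge has a parent is a priority forest, because the last root
  at or below a vertex labels its tree monotonically. The two constructions are mutually
  inverse, and a parking function is determined by its forest and its bird's eye permutation.\<close>

lemma conn_sym: "(x, y) \<in> conn E \<Longrightarrow> (y, x) \<in> conn E"
  unfolding conn_def by (meson sym_Un_converse sym_rtrancl symD)

lemma conn_trans: "(x, y) \<in> conn E \<Longrightarrow> (y, z) \<in> conn E \<Longrightarrow> (x, z) \<in> conn E"
  unfolding conn_def by (rule rtrancl_trans)

lemma conn_converse_edge: "(x, y) \<in> E \<Longrightarrow> (y, x) \<in> conn E"
  unfolding conn_def by auto

lemma conn_refl: "(x, x) \<in> conn E"
  unfolding conn_def by simp

lemma rtrancl_increasing_le: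
  assumes "E \<subseteq> {(a, b). a < b}" and "(x, y) \<in> E\<^sup>*"
  shows "x \<le> (y :: nat)"
  using assms(2) by (induction rule: rtrancl_induct) (use assms(1) in auto)

text \<open>With unique parents, an undirected path leaving a root can never go back up.\<close>
lemma conn_from_root_rtrancl:
  assumes "(r, x) \<in> conn E"
    and parent_unique: "\<And>a a' b. (a, b) \<in> E \<Longrightarrow> (a', b) \<in> E \<Longrightarrow> a = a'"
    and root: "\<And>a. (a, r) \<notin> E"
  shows "(r, x) \<in> E\<^sup>*"
  using assms(1) unfolding conn_def
proof (induction rule: rtrancl_induct)
  case base
  show ?case by simp
next
  case (step y z)
  show ?case
  proof (cases "(y, z) \<in> E")
    case True
    with step.IH show ?thesis by simp
  next
    case False
    with step.hyps have zy: "(z, y) \<in> E" by auto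
    with root have "y \<noteq> r" by auto
    with step.IH obtain w where "(r, w) \<in> E\<^sup>*" "(w, y) \<in> E"
      by (auto elim: rtranclE)
    with parent_unique[OF zy] show ?thesis by simp
  qed
qed

lemma conn_components_ordered:
  fixes g :: "nat \<Rightarrow> nat"
  assumes edge_inv: "\<And>x y. (x, y) \<in> E \<Longrightarrow> g x = g y"
    and "mono g"
    and conn_label: "\<And>x. (x, g x) \<in> conn E"
    and "(x, y) \<notin> conn E"
  shows "(\<forall>u v. (x, u) \<in> conn E \<longrightarrow> (y, v) \<in> conn E \<longrightarrow> u < v) \<or>
         (\<forall>u v. (x, u) \<in> conn E \<longrightarrow> (y, v) \<in> conn E \<longrightarrow> v < u)"
proof -
  have conn_inv: "g u = g v" if "(u, v) \<in> conn E" for u v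
    using that unfolding conn_def
    by (induction rule: rtrancl_induct) (auto dest: edge_inv)
  have less: "u < v" if "g u < g v" for u v
    using that \<open>mono g\<close> by (metis monoD not_le)
  have "g x \<noteq> g y"
    using conn_label[of x] conn_label[of y] \<open>(x, y) \<notin> conn E\<close> conn_sym conn_trans by metis
  then consider "g x < g y" | "g y < g x" by linarith
  then show ?thesis
  proof cases
    case 1
    then have "u < v" if "(x, u) \<in> conn E" "(y, v) \<in> conn E" for u v
      using conn_inv[OF that(1)] conn_inv[OF that(2)] less by simp
    then show ?thesis by blast
  next
    case 2
    then have "v < u" if "(x, u) \<in> conn E" "(y, v) \<in> conn E" for u v
      using conn_inv[OF that(1)] conn_inv[OF that(2)] less by simp
    then show ?thesis by blast
  qed
qed

lemma pforest_increasing: "is_pforest n E \<Longrightarrow> E \<subseteq> {(a, b). a < b \<and> b \<le> n}"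
  by (simp add: is_pforest_def)

lemma pforest_edge: "is_pforest n E \<Longrightarrow> (a, b) \<in> E \<Longrightarrow> a < b \<and> b \<le> n"
  using pforest_increasing by blast

lemma pforest_parent_unique: "is_pforest n E \<Longrightarrow> (a, b) \<in> E \<Longrightarrow> (a', b) \<in> E \<Longrightarrow> a = a'"
  by (simp add: is_pforest_def)

lemma pforest_components_ordered:
  "is_pforest n E \<Longrightarrow> x \<le> n \<Longrightarrow> y \<le> n \<Longrightarrow> (x, y) \<notin> conn E \<Longrightarrow>
    (\<forall>u v. (x, u) \<in> conn E \<longrightarrow> (y, v) \<in> conn E \<longrightarrow> u < v) \<or>
    (\<forall>u v. (x, u) \<in> conn E \<longrightarrow> (y, v) \<in> conn E \<longrightarrow> v < u)"
  by (simp add: is_pforest_def)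

text \<open>A root \<open>t\<close> spans a tree of labels \<open>\<ge> t\<close>, so it is not in the tree of \<open>a\<close> and \<open>b\<close>,
  and \<open>a < t < b\<close> would interleave the two trees.\<close>
lemma pforest_between_edge_has_parent:
  assumes E: "is_pforest n E" and ab: "(a, b) \<in> E" and "a < t" "t < b"
  shows "\<exists>a'. (a', t) \<in> E"
proof (rule ccontr)
  assume "\<nexists>a'. (a', t) \<in> E"
  then have root: "(a', t) \<notin> E" for a'
    by blast
  show False
  proof (cases "(t, b) \<in> conn E")
    case True
    then have "(t, a) \<in> conn E"
      using conn_converse_edge[OF ab] conn_trans by blast
    then have "(t, a) \<in> E\<^sup>*"
      by (rule conn_from_root_rtrancl) (use pforest_parent_unique[OF E] root in auto)
    then have "t \<le> a"
      using rtrancl_increasing_le pforest_increasing[OF E] by blast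
    with \<open>a < t\<close> show False by simp
  next
    case False
    moreover have "t \<le> n" "b \<le> n"
      using pforest_edge[OF E ab] \<open>t < b\<close> by auto
    ultimately consider
      "\<forall>u v. (t, u) \<in> conn E \<longrightarrow> (b, v) \<in> conn E \<longrightarrow> u < v" |
      "\<forall>u v. (t, u) \<in> conn E \<longrightarrow> (b, v) \<in> conn E \<longrightarrow> v < u"
      using pforest_components_ordered[OF E] by blast
    then show False
    proof cases
      case 1
      then have "t < a"
        using conn_refl conn_converse_edge[OF ab] by blast
      with \<open>a < t\<close> show False by simp
    next
      case 2
      then have "b < t"
        using conn_refl by blast
      with \<open>t < b\<close> show False by simp
    qed
  qed
qed

definition last_root :: "(nat \<times> nat) set \<Rightarrow> nat \<Rightarrow> nat" where
  "last_root E x = Max {r. r \<le> x \<and> (\<forall>a. (a, r) \<notin> E)}"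

context
  fixes E :: "(nat \<times> nat) set"
  assumes root0: "\<And>a. (a, 0) \<notin> E"
begin

lemma last_root_le: "last_root E x \<le> x"
  and last_root_root: "(a, last_root E x) \<notin> E"
  and last_root_greatest: "r \<le> x \<Longrightarrow> (\<And>a. (a, r) \<notin> E) \<Longrightarrow> r \<le> last_root E x"
proof -
  let ?R = "{r. r \<le> x \<and> (\<forall>a. (a, r) \<notin> E)}"
  have "finite ?R" "0 \<in> ?R"
    using root0 by auto
  then have "last_root E x \<in> ?R"
    unfolding last_root_def by (intro Max_in) auto
  then show "last_root E x \<le> x" "(a, last_root E x) \<notin> E"
    by auto
  show "r \<le> last_root E x" if "r \<le> x" "\<And>a. (a, r) \<notin> E"
    using that \<open>finite ?R\<close> unfolding last_root_def by (intro Max_ge) auto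
qed

lemma mono_last_root: "mono (last_root E)"
proof
  fix x y :: nat
  assume "x \<le> y"
  then show "last_root E x \<le> last_root E y"
    using last_root_le[of x] last_root_root[of _ x] by (intro last_root_greatest) auto
qed

lemma last_root_of_root: "(\<And>a. (a, x) \<notin> E) \<Longrightarrow> last_root E x = x"
  using last_root_le last_root_greatest[of x x] by (simp add: antisym)

lemma last_root_eq:
  assumes "a \<le> b" and nonroots: "\<And>t. a < t \<Longrightarrow> t \<le> b \<Longrightarrow> \<exists>a'. (a', t) \<in> E"
  shows "last_root E b = last_root E a"
proof (rule antisym)
  have "\<not> a < last_root E b"
    using nonroots[of "last_root E b"] last_root_le[of b] last_root_root[of _ b] by auto
  then show "last_root E b \<le> last_root E a"
    using last_root_root[of _ b] by (intro last_root_greatest) auto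
  show "last_root E a \<le> last_root E b"
    using mono_last_root \<open>a \<le> b\<close> by (rule monoD)
qed

lemma conn_last_root:
  assumes increasing: "\<And>a b. (a, b) \<in> E \<Longrightarrow> a < b"
    and edge_inv: "\<And>a b. (a, b) \<in> E \<Longrightarrow> last_root E a = last_root E b"
  shows "(x, last_root E x) \<in> conn E"
proof (induction x rule: less_induct)
  case (less x)
  show ?case
  proof (cases "\<exists>a. (a, x) \<in> E")
    case True
    then obtain a where ax: "(a, x) \<in> E" by blast
    with increasing less have "(a, last_root E a) \<in> conn E"
      by blast
    then have "(x, last_root E a) \<in> conn E"
      using conn_converse_edge[OF ax] conn_trans by blast
    then show ?thesis
      using edge_inv[OF ax] by simp
  next
    case False
    then show ?thesis
      using last_root_of_root conn_refl by metis
  qed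
qed

end

text \<open>Converse of \<open>pforest_between_edge_has_parent\<close>: the last root at or below a vertex is
  constant on its tree and monotone, so it orders the trees.\<close>
lemma is_pforestI:
  assumes increasing: "E \<subseteq> {(a, b). a < b \<and> b \<le> n}"
    and parent_unique: "\<And>a a' b. (a, b) \<in> E \<Longrightarrow> (a', b) \<in> E \<Longrightarrow> a = a'"
    and between: "\<And>a b t. (a, b) \<in> E \<Longrightarrow> a < t \<Longrightarrow> t < b \<Longrightarrow> \<exists>a'. (a', t) \<in> E"
  shows "is_pforest n E"
proof -
  have root0: "(a, 0) \<notin> E" for a
    using increasing by auto
  have edge_inv: "last_root E a = last_root E b" if ab: "(a, b) \<in> E" for a b
  proof -
    have "\<exists>a'. (a', t) \<in> E" if "a < t" "t \<le> b" for t
      using between[OF ab] ab that by (cases "t = b") auto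
    moreover have "a \<le> b"
      using ab increasing by auto
    ultimately show ?thesis
      using last_root_eq[OF root0] by metis
  qed
  have conn_label: "(x, last_root E x) \<in> conn E" for x
    using increasing edge_inv by (intro conn_last_root[OF root0]) auto
  show ?thesis
    unfolding is_pforest_def
  proof (intro conjI allI impI)
    show "(a, b) \<in> E \<Longrightarrow> (a', b) \<in> E \<Longrightarrow> a = a'" for a a' b
      by (rule parent_unique)
    show "(\<forall>u v. (x, u) \<in> conn E \<longrightarrow> (y, v) \<in> conn E \<longrightarrow> u < v) \<or>
          (\<forall>u v. (x, u) \<in> conn E \<longrightarrow> (y, v) \<in> conn E \<longrightarrow> v < u)"
      if "(x, y) \<notin> conn E" for x y
      using conn_components_ordered[OF edge_inv mono_last_root[OF root0] conn_label that] .
  qed (rule increasing)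
qed

lemma None_iff_notin_image:
  assumes "\<And>s c. \<omega> s = Some c \<longleftrightarrow> c \<in> A \<and> f c = s"
  shows "\<omega> s = None \<longleftrightarrow> s \<notin> f ` A"
proof -
  have "\<omega> s \<noteq> None \<longleftrightarrow> (\<exists>c. \<omega> s = Some c)"
    by blast
  also have "\<dots> \<longleftrightarrow> s \<in> f ` A"
    using assms by (auto simp: image_iff)
  finally show ?thesis
    by blast
qed

text \<open>Car \<open>c\<close> has preference \<open>a c\<close> and takes spot \<open>f c\<close>.\<close>
definition first_free_spot :: "nat \<Rightarrow> (nat \<Rightarrow> nat) \<Rightarrow> (nat \<Rightarrow> nat) \<Rightarrow> nat \<Rightarrow> bool" where
  "first_free_spot n a f c \<longleftrightarrow> a c \<le> f c \<and> f c \<le> n \<and> f c \<notin> f ` {1..<c} \<and>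
     (\<forall>t. a c \<le> t \<longrightarrow> t < f c \<longrightarrow> t \<in> f ` {1..<c})"

lemma park_state_Suc_first_free:
  assumes "\<pi> (Suc k) = Some a" and s: "a \<le> s" "s \<le> n" "park_state n \<pi> k s = None"
    and taken: "\<And>t. a \<le> t \<Longrightarrow> t < s \<Longrightarrow> park_state n \<pi> k t \<noteq> None"
  shows "park_state n \<pi> (Suc k) = (park_state n \<pi> k)(s \<mapsto> Suc k)"
proof -
  have "(LEAST t. a \<le> t \<and> t \<le> n \<and> park_state n \<pi> k t = None) = s"
  proof (rule Least_equality)
    show "a \<le> s \<and> s \<le> n \<and> park_state n \<pi> k s = None"
      using s by simp
    show "s \<le> t" if "a \<le> t \<and> t \<le> n \<and> park_state n \<pi> k t = None" for t
      using that taken[of t] by (meson not_le)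
  qed
  moreover have "\<exists>t. a \<le> t \<and> t \<le> n \<and> park_state n \<pi> k t = None"
    using s by blast
  ultimately show ?thesis
    by (simp add: Let_def assms(1))
qed

lemma park_state_first_free:
  assumes "\<And>c. c \<in> {1..k} \<Longrightarrow> \<pi> c = Some (a c)"
    and "\<And>c. c \<in> {1..k} \<Longrightarrow> first_free_spot n a f c"
  shows "park_state n \<pi> k s = Some c \<longleftrightarrow> c \<in> {1..k} \<and> f c = s"
  using assms
proof (induction k arbitrary: s c)
  case 0
  show ?case by simp
next
  case (Suc k)
  let ?\<omega> = "park_state n \<pi> k"
  have state: "?\<omega> s' = Some c' \<longleftrightarrow> c' \<in> {1..k} \<and> f c' = s'" for s' c'
    by (rule Suc.IH) (use Suc.prems in auto)
  have free: "?\<omega> t = None \<longleftrightarrow> t \<notin> f ` {1..<Suc k}" for t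
    using state by (intro None_iff_notin_image) (simp add: atLeastLessThanSuc_atLeastAtMost)
  have k: "Suc k \<in> {1..Suc k}"
    by simp
  have spot: "first_free_spot n a f (Suc k)"
    using Suc.prems(2)[OF k] .
  have step: "park_state n \<pi> (Suc k) = ?\<omega>(f (Suc k) \<mapsto> Suc k)"
  proof (rule park_state_Suc_first_free)
    show "\<pi> (Suc k) = Some (a (Suc k))"
      using Suc.prems(1)[OF k] .
  qed (use spot free in \<open>auto simp: first_free_spot_def\<close>)
  show ?case
  proof (cases "s = f (Suc k)")
    case True
    have "c = Suc k" if "c \<in> {1..Suc k}" "f c = f (Suc k)"
      using spot that unfolding first_free_spot_def
      by (metis atLeastAtMost_iff atLeastLessThan_iff image_eqI le_neq_implies_less)
    with True show ?thesis
      unfolding step by auto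
  next
    case False
    then have "c \<in> {1..Suc k} \<and> f c = s \<longleftrightarrow> c \<in> {1..k} \<and> f c = s"
      by (auto simp: le_Suc_eq)
    with False state[of s c] show ?thesis
      unfolding step by simp
  qed
qed

lemma inj_on_if_fresh:
  fixes f :: "nat \<Rightarrow> 'a"
  assumes "\<And>c. c \<in> {1..m} \<Longrightarrow> f c \<notin> f ` {1..<c}"
  shows "inj_on f {1..m}"
proof (rule inj_onI)
  fix c i :: nat
  assume c: "c \<in> {1..m}" and i: "i \<in> {1..m}" and eq: "f c = f i"
  show "c = i"
  proof (rule ccontr)
    assume "c \<noteq> i"
    then have "c \<in> {1..<i} \<or> i \<in> {1..<c}"
      using c i by auto
    with eq assms[OF c] assms[OF i] show False
      by (metis image_eqI)
  qed
qed

lemma map_inv_Some_iff: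
  assumes "inj_on f (dom f)"
  shows "map_inv f y = Some x \<longleftrightarrow> f x = Some y"
proof (cases "\<exists>x'. f x' = Some y")
  case True
  then obtain x' where x': "f x' = Some y" by blast
  have unique: "z = x'" if "f z = Some y" for z
    using assms that x' by (metis domI inj_onD)
  then have "(THE z. f z = Some y) = x'"
    using x' by blast
  with True have "map_inv f y = Some x'"
    unfolding map_inv_def by simp
  moreover have "f x = Some y \<longleftrightarrow> x = x'"
    using unique x' by blast
  ultimately show ?thesis
    by auto
next
  case False
  then show ?thesis
    unfolding map_inv_def by auto
qed

lemma map_eqI_Some: "(\<And>x y. f x = Some y \<longleftrightarrow> g x = Some y) \<Longrightarrow> f = g"
proof (rule ext)
  fix x
  assume eq: "\<And>x y. f x = Some y \<longleftrightarrow> g x = Some y"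
  show "f x = g x"
  proof (cases "f x")
    case None
    then show ?thesis
      using eq[of x "the (g x)"] by (cases "g x") simp_all
  next
    case (Some y)
    then show ?thesis
      using eq[of x y] by simp
  qed
qed

definition chain_edge :: "(nat \<times> nat) set list \<Rightarrow> nat \<Rightarrow> nat \<times> nat" where
  "chain_edge C i = the_elem (C ! i - C ! (i - 1))"

abbreviation chain_parent :: "(nat \<times> nat) set list \<Rightarrow> nat \<Rightarrow> nat" where
  "chain_parent C i \<equiv> fst (chain_edge C i)"

abbreviation chain_child :: "(nat \<times> nat) set list \<Rightarrow> nat \<Rightarrow> nat" where
  "chain_child C i \<equiv> snd (chain_edge C i)"

definition psi :: "nat \<Rightarrow> (nat \<times> nat) set list \<Rightarrow> nat \<Rightarrow> nat option" where
  "psi m C = shifted_parent (C ! m) \<circ>\<^sub>m jh C"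

context
  fixes n m C
  assumes C: "C \<in> complete_chains n m"
begin

lemma chain_length: "length C = Suc m"
  using C by (simp add: complete_chains_def)

lemma chain_pforest: "i \<le> m \<Longrightarrow> is_pforest n (C ! i)"
  using C by (simp add: complete_chains_def)

lemma chain_step:
  assumes "i \<in> {1..m}"
  shows "chain_edge C i \<notin> C ! (i - 1)" and "C ! i = insert (chain_edge C i) (C ! (i - 1))"
proof -
  have "i - 1 < m"
    using assms by auto
  with C obtain e where "e \<notin> C ! (i - 1)" "C ! Suc (i - 1) = insert e (C ! (i - 1))"
    unfolding complete_chains_def by blast
  moreover have "Suc (i - 1) = i"
    using assms by simp
  ultimately have "e \<notin> C ! (i - 1)" "C ! i = insert e (C ! (i - 1))" "C ! i - C ! (i - 1) = {e}"
    by auto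
  then show "chain_edge C i \<notin> C ! (i - 1)" "C ! i = insert (chain_edge C i) (C ! (i - 1))"
    unfolding chain_edge_def by simp_all
qed

lemma chain_nth: "i \<le> m \<Longrightarrow> C ! i = chain_edge C ` {1..i}"
proof (induction i)
  case 0
  then show ?case
    using C by (simp add: complete_chains_def)
next
  case (Suc i)
  then have "C ! Suc i = insert (chain_edge C (Suc i)) (chain_edge C ` {1..i})"
    using chain_step(2)[of "Suc i"] by simp
  also have "\<dots> = chain_edge C ` {1..Suc i}"
    by (simp add: atLeastAtMostSuc_conv)
  finally show ?case .
qed

lemma chain_edge_mem: "c \<in> {1..i} \<Longrightarrow> i \<le> m \<Longrightarrow> chain_edge C c \<in> C ! i"
  using chain_nth by blast

lemma chain_edge_increasing:
  assumes "c \<in> {1..m}"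
  shows "chain_parent C c < chain_child C c \<and> chain_child C c \<le> n"
proof -
  have "(chain_parent C c, chain_child C c) \<in> C ! m"
    using assms chain_edge_mem by simp
  then show ?thesis
    by (rule pforest_edge[OF chain_pforest[OF order_refl]])
qed

lemma chain_child_fresh:
  assumes i: "i \<in> {1..m}"
  shows "chain_child C i \<notin> chain_child C ` {1..<i}"
proof
  assume "chain_child C i \<in> chain_child C ` {1..<i}"
  then obtain c where c: "c \<in> {1..<i}" "chain_child C c = chain_child C i"
    by force
  have old: "chain_edge C c \<in> C ! (i - 1)"
    using c(1) i by (intro chain_edge_mem) auto
  then have "chain_edge C c \<in> C ! i"
    using chain_step(2)[OF i] by simp
  then have "(chain_parent C c, chain_child C i) \<in> C ! i"
    unfolding c(2)[symmetric] by simp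
  moreover have "(chain_parent C i, chain_child C i) \<in> C ! i"
    using i chain_edge_mem[of i i] by simp
  ultimately have "chain_parent C c = chain_parent C i"
    using i by (intro pforest_parent_unique[OF chain_pforest]) auto
  with c(2) have "chain_edge C c = chain_edge C i"
    by (simp add: prod_eq_iff)
  with old chain_step(1)[OF i] show False
    by simp
qed

lemma inj_on_chain_child: "inj_on (chain_child C) {1..m}"
  using chain_child_fresh by (rule inj_on_if_fresh)

lemma chain_child_fill:
  assumes i: "i \<in> {1..m}" and t: "chain_parent C i < t" "t < chain_child C i"
  shows "t \<in> chain_child C ` {1..<i}"
proof -
  have "i \<le> m"
    using i by simp
  have "(chain_parent C i, chain_child C i) \<in> C ! i"
    using i chain_edge_mem[of i i] by simp
  then obtain a where "(a, t) \<in> C ! i"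
    using pforest_between_edge_has_parent[OF chain_pforest[OF \<open>i \<le> m\<close>]] t by blast
  then obtain c where c: "c \<in> {1..i}" "chain_edge C c = (a, t)"
    using chain_nth[OF \<open>i \<le> m\<close>] by auto
  then have "c \<noteq> i"
    using t(2) by auto
  with c have "c \<in> {1..<i}" "t = chain_child C c"
    by auto
  then show ?thesis
    by blast
qed

lemma jh_eq: "jh C i = (if i \<in> {1..m} then Some (chain_child C i) else None)"
proof -
  have "jh C i = (if i \<in> {1..m} then Some (max (chain_parent C i) (chain_child C i)) else None)"
    by (simp add: jh_def chain_length chain_edge_def Let_def)
  then show ?thesis
    using chain_edge_increasing[of i] by (auto simp: max_def)
qed

lemma psi_eq: "psi m C k = (if k \<in> {1..m} then Some (chain_parent C k + 1) else None)"
proof (cases "k \<in> {1..m}")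
  case True
  then have edge: "(chain_parent C k, chain_child C k) \<in> C ! m"
    using chain_edge_mem by simp
  then have "(THE a. (a, chain_child C k) \<in> C ! m) = chain_parent C k"
    using pforest_parent_unique[OF chain_pforest] by blast
  moreover have "\<exists>a. (a, chain_child C k) \<in> C ! m"
    using edge by blast
  ultimately show ?thesis
    using True unfolding psi_def shifted_parent_def by (simp add: jh_eq)
next
  case False
  then show ?thesis
    by (simp add: psi_def jh_eq)
qed

lemma psi_Some_iff: "psi m C c = Some a \<longleftrightarrow> c \<in> {1..m} \<and> a = chain_parent C c + 1"
  by (auto simp: psi_eq)

lemma chain_first_free_spot:
  assumes "c \<in> {1..m}"
  shows "first_free_spot n (\<lambda>c. chain_parent C c + 1) (chain_child C) c"
  unfolding first_free_spot_def
  using chain_edge_increasing[OF assms] chain_child_fresh[OF assms] chain_child_fill[OF assms]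
  by (simp add: Suc_le_eq)

lemma park_state_psi:
  assumes "k \<le> m"
  shows "park_state n (psi m C) k s = Some c \<longleftrightarrow> c \<in> {1..k} \<and> chain_child C c = s"
proof (rule park_state_first_free[where a = "\<lambda>c. chain_parent C c + 1"])
  show "psi m C c = Some (chain_parent C c + 1)" if "c \<in> {1..k}" for c
    using that assms by (simp add: psi_eq)
  show "first_free_spot n (\<lambda>c. chain_parent C c + 1) (chain_child C) c" if "c \<in> {1..k}" for c
    using that assms by (intro chain_first_free_spot) simp
qed

lemma psi_parking_function: "psi m C \<in> parking_functions m n"
  unfolding parking_functions_def
proof (intro CollectI conjI ballI)
  show "dom (psi m C) = {1..m}"
    by (auto simp: psi_eq dom_def)
  show "ran (psi m C) \<subseteq> {1..n}"
  proof
    fix v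
    assume "v \<in> ran (psi m C)"
    then obtain k where "psi m C k = Some v"
      by (auto simp: ran_def)
    then have "k \<in> {1..m}" "v = chain_parent C k + 1"
      by (simp_all add: psi_eq split: if_splits)
    then show "v \<in> {1..n}"
      using chain_edge_increasing[of k] by auto
  qed
  fix k
  assume k: "k \<in> {1..m}"
  have "park_state n (psi m C) (k - 1) (chain_child C k) = None"
  proof (rule ccontr)
    assume "park_state n (psi m C) (k - 1) (chain_child C k) \<noteq> None"
    then obtain c where "park_state n (psi m C) (k - 1) (chain_child C k) = Some c"
      by blast
    with k have "c \<in> {1..<k}" "chain_child C c = chain_child C k"
      by (auto simp: park_state_psi)
    with chain_child_fresh[OF k] show False
      by (metis image_eqI)
  qed
  with k show "\<exists>s. the (psi m C k) \<le> s \<and> s \<le> n \<and> park_state n (psi m C) (k - 1) s = None"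
    using chain_edge_increasing[OF k] by (auto simp: psi_eq Suc_le_eq)
qed

lemma inj_on_jh: "inj_on (jh C) (dom (jh C))"
proof (rule inj_onI)
  fix x y
  assume "x \<in> dom (jh C)" "y \<in> dom (jh C)" "jh C x = jh C y"
  then have "x \<in> {1..m}" "y \<in> {1..m}" "chain_child C x = chain_child C y"
    by (auto simp: jh_eq split: if_splits)
  then show "x = y"
    using inj_on_chain_child by (blast dest: inj_onD)
qed

lemma birdseye_psi: "birdseye m n (psi m C) = map_inv (jh C)"
proof (rule map_eqI_Some)
  fix s c
  have "birdseye m n (psi m C) s = Some c \<longleftrightarrow> c \<in> {1..m} \<and> chain_child C c = s"
    by (simp add: birdseye_def park_state_psi)
  also have "\<dots> \<longleftrightarrow> jh C c = Some s"
    by (auto simp: jh_eq)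
  also have "\<dots> \<longleftrightarrow> map_inv (jh C) s = Some c"
    by (simp add: map_inv_Some_iff[OF inj_on_jh])
  finally show "birdseye m n (psi m C) s = Some c \<longleftrightarrow> map_inv (jh C) s = Some c" .
qed

lemma pf_forest_psi: "pf_forest m n (psi m C) = C ! m"
proof -
  have comp: "(psi m C \<circ>\<^sub>m birdseye m n (psi m C)) s = Some a \<longleftrightarrow>
      (\<exists>c \<in> {1..m}. chain_child C c = s \<and> a = chain_parent C c + 1)" for s a
    unfolding map_comp_Some_iff birdseye_def park_state_psi[OF order_refl] psi_Some_iff by blast
  have "e \<in> pf_forest m n (psi m C) \<longleftrightarrow> e \<in> chain_edge C ` {1..m}" for e
  proof
    assume "e \<in> pf_forest m n (psi m C)"
    then obtain a s where e: "e = (a - 1, s)"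
      and "(psi m C \<circ>\<^sub>m birdseye m n (psi m C)) s = Some a"
      unfolding pf_forest_def by blast
    then obtain c where "c \<in> {1..m}" "chain_child C c = s" "a = chain_parent C c + 1"
      using comp by blast
    with e show "e \<in> chain_edge C ` {1..m}"
      by force
  next
    assume "e \<in> chain_edge C ` {1..m}"
    then obtain c where c: "c \<in> {1..m}" "e = (chain_parent C c + 1 - 1, chain_child C c)"
      by force
    then have "(psi m C \<circ>\<^sub>m birdseye m n (psi m C)) (chain_child C c) = Some (chain_parent C c + 1)"
      using comp by blast
    with c(2) show "e \<in> pf_forest m n (psi m C)"
      unfolding pf_forest_def by blast
  qed
  then show ?thesis
    using chain_nth by blast
qed

end

definition park_spot :: "nat \<Rightarrow> (nat \<Rightarrow> nat option) \<Rightarrow> nat \<Rightarrow> nat" where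
  "park_spot n \<pi> k = (LEAST s. the (\<pi> k) \<le> s \<and> s \<le> n \<and> park_state n \<pi> (k - 1) s = None)"

definition car_edge :: "nat \<Rightarrow> (nat \<Rightarrow> nat option) \<Rightarrow> nat \<Rightarrow> nat \<times> nat" where
  "car_edge n \<pi> c = (the (\<pi> c) - 1, park_spot n \<pi> c)"

definition psi_inv :: "nat \<Rightarrow> nat \<Rightarrow> (nat \<Rightarrow> nat option) \<Rightarrow> (nat \<times> nat) set list" where
  "psi_inv n m \<pi> = map (\<lambda>i. car_edge n \<pi> ` {1..i}) [0..<Suc m]"

lemma length_psi_inv: "length (psi_inv n m \<pi>) = Suc m"
  by (simp add: psi_inv_def)

lemma psi_inv_nth: "i \<le> m \<Longrightarrow> psi_inv n m \<pi> ! i = car_edge n \<pi> ` {1..i}"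
  by (simp add: psi_inv_def nth_map_upt del: upt_Suc)

context
  fixes m n \<pi>
  assumes \<pi>: "\<pi> \<in> parking_functions m n"
begin

lemma parking_function_Some:
  assumes "c \<in> {1..m}"
  shows "\<pi> c = Some (the (\<pi> c))"
proof -
  have "c \<in> dom \<pi>"
    using \<pi> assms by (simp add: parking_functions_def)
  then show ?thesis
    by auto
qed

lemma parking_function_None: "c \<notin> {1..m} \<Longrightarrow> \<pi> c = None"
  using \<pi> by (auto simp: parking_functions_def)

lemma parking_function_pref_range:
  assumes "c \<in> {1..m}"
  shows "the (\<pi> c) \<in> {1..n}"
proof -
  have "the (\<pi> c) \<in> ran \<pi>"
    using parking_function_Some[OF assms] by (metis ranI)
  then show ?thesis
    using \<pi> by (auto simp: parking_functions_def)
qed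

lemma park_spot_first_free: "c \<in> {1..m} \<Longrightarrow> first_free_spot n (\<lambda>c. the (\<pi> c)) (park_spot n \<pi>) c"
proof (induction c rule: less_induct)
  case (less c)
  have state0: "park_state n \<pi> (c - 1) s = Some c' \<longleftrightarrow> c' \<in> {1..c - 1} \<and> park_spot n \<pi> c' = s"
    for s c'
  proof (rule park_state_first_free[where a = "\<lambda>c. the (\<pi> c)"])
    show "\<pi> c' = Some (the (\<pi> c'))" if "c' \<in> {1..c - 1}" for c'
      using that less.prems by (intro parking_function_Some) auto
    show "first_free_spot n (\<lambda>c. the (\<pi> c)) (park_spot n \<pi>) c'" if "c' \<in> {1..c - 1}" for c'
      using that less.prems by (intro less.IH) auto
  qed
  have "{1..c - 1} = {1..<c}"
    by (cases c) auto
  note state = state0[unfolded this]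
  have free: "park_state n \<pi> (c - 1) s = None \<longleftrightarrow> s \<notin> park_spot n \<pi> ` {1..<c}" for s
    using state by (rule None_iff_notin_image)
  let ?free = "\<lambda>s. the (\<pi> c) \<le> s \<and> s \<le> n \<and> park_state n \<pi> (c - 1) s = None"
  have "\<exists>s. ?free s"
    using \<pi> less.prems by (simp add: parking_functions_def)
  then have spot: "?free (park_spot n \<pi> c)"
    unfolding park_spot_def by (rule LeastI_ex)
  have taken: "t \<in> park_spot n \<pi> ` {1..<c}" if "the (\<pi> c) \<le> t" "t < park_spot n \<pi> c" for t
  proof -
    have "\<not> ?free t"
      using \<open>t < park_spot n \<pi> c\<close> unfolding park_spot_def by (rule not_less_Least)
    with that spot have "park_state n \<pi> (c - 1) t \<noteq> None"
      by simp
    with free[of t] show ?thesis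
      by blast
  qed
  with spot free[of "park_spot n \<pi> c"] show ?case
    unfolding first_free_spot_def by blast
qed

lemma park_state_parking_function:
  assumes "k \<le> m"
  shows "park_state n \<pi> k s = Some c \<longleftrightarrow> c \<in> {1..k} \<and> park_spot n \<pi> c = s"
proof (rule park_state_first_free[where a = "\<lambda>c. the (\<pi> c)"])
  show "\<pi> c = Some (the (\<pi> c))" if "c \<in> {1..k}" for c
    using that assms by (intro parking_function_Some) auto
  show "first_free_spot n (\<lambda>c. the (\<pi> c)) (park_spot n \<pi>) c" if "c \<in> {1..k}" for c
    using that assms by (intro park_spot_first_free) auto
qed

lemma inj_on_park_spot: "inj_on (park_spot n \<pi>) {1..m}"
  using park_spot_first_free unfolding first_free_spot_def by (intro inj_on_if_fresh) blast

lemma car_edge_increasing: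
  "c \<in> {1..m} \<Longrightarrow> fst (car_edge n \<pi> c) < snd (car_edge n \<pi> c) \<and> snd (car_edge n \<pi> c) \<le> n"
  using parking_function_pref_range[of c] park_spot_first_free[of c, unfolded first_free_spot_def] by (auto simp: car_edge_def)

lemma pforest_car_edges:
  assumes "i \<le> m"
  shows "is_pforest n (car_edge n \<pi> ` {1..i})"
proof (rule is_pforestI)
  show "car_edge n \<pi> ` {1..i} \<subseteq> {(a, b). a < b \<and> b \<le> n}"
  proof
    fix e
    assume "e \<in> car_edge n \<pi> ` {1..i}"
    then obtain c where "c \<in> {1..i}" "e = car_edge n \<pi> c"
      by blast
    moreover from this assms have "c \<in> {1..m}"
      by simp
    ultimately show "e \<in> {(a, b). a < b \<and> b \<le> n}"
      using car_edge_increasing[of c] by (simp add: case_prod_beta)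
  qed
  show "a = a'" if "(a, b) \<in> car_edge n \<pi> ` {1..i}" "(a', b) \<in> car_edge n \<pi> ` {1..i}" for a a' b
  proof -
    from that obtain c c' where c: "c \<in> {1..i}" "car_edge n \<pi> c = (a, b)"
      and c': "c' \<in> {1..i}" "car_edge n \<pi> c' = (a', b)"
      by (metis imageE)
    then have "c = c'"
      using inj_on_park_spot assms by (auto simp: car_edge_def dest: inj_onD)
    with c c' show ?thesis
      by simp
  qed
  show "\<exists>a'. (a', t) \<in> car_edge n \<pi> ` {1..i}"
    if "(a, b) \<in> car_edge n \<pi> ` {1..i}" "a < t" "t < b" for a b t
  proof -
    from that obtain c where c: "c \<in> {1..i}" "a = the (\<pi> c) - 1" "b = park_spot n \<pi> c"
      by (auto simp: car_edge_def)
    with assms that have "t \<in> park_spot n \<pi> ` {1..<c}"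
      using park_spot_first_free[of c, unfolded first_free_spot_def] by auto
    then obtain c' where "c' \<in> {1..<c}" "t = park_spot n \<pi> c'"
      by blast
    with c have "(the (\<pi> c') - 1, t) \<in> car_edge n \<pi> ` {1..i}"
      by (auto simp: car_edge_def)
    then show ?thesis ..
  qed
qed

lemma car_edge_fresh: "c \<in> {1..m} \<Longrightarrow> car_edge n \<pi> c \<notin> car_edge n \<pi> ` {1..<c}"
  using park_spot_first_free[of c, unfolded first_free_spot_def] by (auto simp: car_edge_def)

lemma psi_inv_chain: "psi_inv n m \<pi> \<in> complete_chains n m"
  unfolding complete_chains_def
proof (intro CollectI conjI allI impI)
  show "length (psi_inv n m \<pi>) = Suc m"
    by (rule length_psi_inv)
  show "psi_inv n m \<pi> ! 0 = {}"
    by (simp add: psi_inv_nth)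
  show "is_pforest n (psi_inv n m \<pi> ! i)" if "i \<le> m" for i
    using pforest_car_edges[OF that] that by (simp add: psi_inv_nth)
  show "\<exists>e. e \<notin> psi_inv n m \<pi> ! i \<and> psi_inv n m \<pi> ! Suc i = insert e (psi_inv n m \<pi> ! i)"
    if "i < m" for i
  proof (intro exI conjI)
    show "car_edge n \<pi> (Suc i) \<notin> psi_inv n m \<pi> ! i"
      using that car_edge_fresh[of "Suc i"] by (simp add: psi_inv_nth atLeastLessThanSuc_atLeastAtMost)
    show "psi_inv n m \<pi> ! Suc i = insert (car_edge n \<pi> (Suc i)) (psi_inv n m \<pi> ! i)"
      using that by (simp add: psi_inv_nth atLeastAtMostSuc_conv)
  qed
qed

lemma chain_edge_psi_inv:
  assumes c: "c \<in> {1..m}"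
  shows "chain_edge (psi_inv n m \<pi>) c = car_edge n \<pi> c"
proof -
  have "{1..c} = insert c {1..<c}" "{1..c - 1} = {1..<c}"
    using c by auto
  with c car_edge_fresh[OF c]
  have "psi_inv n m \<pi> ! c - psi_inv n m \<pi> ! (c - 1) = {car_edge n \<pi> c}"
    by (auto simp: psi_inv_nth)
  then show ?thesis
    by (simp add: chain_edge_def)
qed

end

lemma psi_psi_inv:
  assumes \<pi>: "\<pi> \<in> parking_functions m n"
  shows "psi m (psi_inv n m \<pi>) = \<pi>"
proof
  fix k
  show "psi m (psi_inv n m \<pi>) k = \<pi> k"
  proof (cases "k \<in> {1..m}")
    case True
    obtain a where a: "\<pi> k = Some a"
      using parking_function_Some[OF \<pi> True] by blast
    then have "chain_parent (psi_inv n m \<pi>) k + 1 = a"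
      using parking_function_pref_range[OF \<pi> True] by (simp add: chain_edge_psi_inv[OF \<pi> True] car_edge_def)
    with True a show ?thesis
      by (simp add: psi_eq[OF psi_inv_chain[OF \<pi>]])
  next
    case False
    then show ?thesis
      by (simp add: psi_eq[OF psi_inv_chain[OF \<pi>]] parking_function_None[OF \<pi>])
  qed
qed

lemma park_spot_psi:
  assumes C: "C \<in> complete_chains n m" and c: "c \<in> {1..m}"
  shows "park_spot n (psi m C) c = chain_child C c"
  using park_state_psi[OF C order_refl, of "chain_child C c" c]
    park_state_parking_function[OF psi_parking_function[OF C] order_refl, of "chain_child C c" c] c
  by simp

lemma psi_inv_psi:
  assumes C: "C \<in> complete_chains n m"
  shows "psi_inv n m (psi m C) = C"
proof (rule nth_equalityI)
  show "length (psi_inv n m (psi m C)) = length C"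
    by (simp add: length_psi_inv chain_length[OF C])
  fix i
  assume "i < length (psi_inv n m (psi m C))"
  then have i: "i \<le> m"
    by (simp add: length_psi_inv)
  have "car_edge n (psi m C) c = chain_edge C c" if "c \<in> {1..m}" for c
    using that by (simp add: car_edge_def psi_eq[OF C] park_spot_psi[OF C])
  then show "psi_inv n m (psi m C) ! i = C ! i"
    using i by (simp add: psi_inv_nth chain_nth[OF C])
qed

text \<open>Car \<open>k\<close> sits at the spot \<open>s\<close> with \<open>\<omega>(s) = k\<close>, and the parent of \<open>s\<close> in the forest is
  \<open>\<pi>(k) - 1\<close>.\<close>
lemma parking_function_eqI:
  assumes \<pi>: "\<pi> \<in> parking_functions m n" and \<pi>': "\<pi>' \<in> parking_functions m n"
    and forest: "pf_forest m n \<pi> = pf_forest m n \<pi>'"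
    and birdseye: "birdseye m n \<pi> = birdseye m n \<pi>'"
  shows "\<pi> = \<pi>'"
proof
  fix k
  show "\<pi> k = \<pi>' k"
  proof (cases "k \<in> {1..m}")
    case True
    let ?s = "park_spot n \<pi> k"
    have "birdseye m n \<pi> ?s = Some k"
      using True by (simp add: birdseye_def park_state_parking_function[OF \<pi>])
    then have \<omega>': "birdseye m n \<pi>' ?s = Some k"
      by (simp add: birdseye)
    have "(the (\<pi> k) - 1, ?s) \<in> pf_forest m n \<pi>"
      using \<open>birdseye m n \<pi> ?s = Some k\<close> parking_function_Some[OF \<pi> True] unfolding pf_forest_def
      by (auto simp: map_comp_Some_iff)
    then have "(the (\<pi> k) - 1, ?s) \<in> pf_forest m n \<pi>'"
      by (simp add: forest)
    with \<omega>' have "the (\<pi> k) - 1 = the (\<pi>' k) - 1"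
      unfolding pf_forest_def by (auto simp: map_comp_Some_iff)
    with parking_function_pref_range[OF \<pi> True] parking_function_pref_range[OF \<pi>' True] have "the (\<pi> k) = the (\<pi>' k)"
      by auto
    then show ?thesis
      using parking_function_Some[OF \<pi> True] parking_function_Some[OF \<pi>' True] by simp
  next
    case False
    then show ?thesis
      by (simp add: parking_function_None[OF \<pi>] parking_function_None[OF \<pi>'])
  qed
qed

theorem theorem4p3:
  fixes n m :: nat
  assumes "1 \<le> m" and "m \<le> n"
  shows "bij_betw (\<lambda>C. shifted_parent (C ! m) \<circ>\<^sub>m jh C)
            (complete_chains n m) (parking_functions m n)
       \<and> (\<forall>C \<in> complete_chains n m.
            pf_forest m n (shifted_parent (C ! m) \<circ>\<^sub>m jh C) = C ! m \<and>
            birdseye m n (shifted_parent (C ! m) \<circ>\<^sub>m jh C) = map_inv (jh C))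
       \<and> (\<forall>\<psi>. bij_betw \<psi> (complete_chains n m) (parking_functions m n) \<and>
              (\<forall>C \<in> complete_chains n m.
                 pf_forest m n (\<psi> C) = C ! m \<and> birdseye m n (\<psi> C) = map_inv (jh C))
            \<longrightarrow> (\<forall>C \<in> complete_chains n m. \<psi> C = shifted_parent (C ! m) \<circ>\<^sub>m jh C))"
  unfolding psi_def[symmetric]
proof (intro conjI ballI allI impI)
  show "bij_betw (psi m) (complete_chains n m) (parking_functions m n)"
    by (rule bij_betw_byWitness[where f' = "psi_inv n m"])
      (use psi_inv_psi psi_psi_inv psi_parking_function psi_inv_chain in blast)+
next
  fix C
  assume "C \<in> complete_chains n m"
  then show "pf_forest m n (psi m C) = C ! m" "birdseye m n (psi m C) = map_inv (jh C)"
    by (rule pf_forest_psi, rule birdseye_psi)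
next
  fix \<psi> C
  assume \<psi>: "bij_betw \<psi> (complete_chains n m) (parking_functions m n) \<and>
      (\<forall>C \<in> complete_chains n m. pf_forest m n (\<psi> C) = C ! m \<and> birdseye m n (\<psi> C) = map_inv (jh C))"
    and C: "C \<in> complete_chains n m"
  show "\<psi> C = psi m C"
  proof (rule parking_function_eqI)
    show "\<psi> C \<in> parking_functions m n"
      using \<psi> C by (blast dest: bij_betwE)
    show "psi m C \<in> parking_functions m n"
      using C by (rule psi_parking_function)
    show "pf_forest m n (\<psi> C) = pf_forest m n (psi m C)"
      using \<psi> C by (simp add: pf_forest_psi)
    show "birdseye m n (\<psi> C) = birdseye m n (psi m C)"
      using \<psi> C by (simp add: birdseye_psi)
  qed
qed

end
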